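(* Let $\psi:V\to\mathbb R$ be an eigenfunction of $-A_\alpha$ with eigenvalue $\lambda\ge0$. Then for every $k\in\mathbb N$, the function $f_{\psi,k}:\Xi_k\to\mathbb R$, $f_{\psi,k}(\eta):=\sum_{x\in V}\psi(x)\eta_x$, is an eigenfunction of $-L_k$ with the same eigenvalue $\lambda$.
   Context: $V$ is a finite set with symmetric non-negative weights $c_{xy}=c_{yx}\ge0$ forming a connected graph, and $\alpha=(\alpha_x)_{x\in V}$ positive. $A_\alpha f(x)=\sum_{y}c_{xy}\alpha_y(f(y)-f(x))$ for $f:V\to\mathbb R$. $\Xi_k:=\{\eta\in\mathbb N_0^V:\sum_x\eta_x=k\}$ and $L_kf(\eta)=\sum_x\eta_x\sum_y c_{xy}(\alpha_y+\eta_y)(f(\eta-\delta_x+\delta_y)-f(\eta))$ for $f:\Xi_k\to\mathbb R$, where $\eta-\delta_x+\delta_y$ is obtained from $\eta$ by moving one particle from $x$ to $y$. An eigenfunction is required to be non-zero. *)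

theory Defs
  imports Complex_Main
begin

definition weighted_connected_graph :: "'v set \<Rightarrow> ('v \<Rightarrow> 'v \<Rightarrow> real) \<Rightarrow> bool" where
  "weighted_connected_graph V c \<longleftrightarrow>
     finite V \<and> V \<noteq> {} \<and>
     (\<forall>x\<in>V. \<forall>y\<in>V. c x y = c y x \<and> c x y \<ge> 0) \<and>
     (\<forall>x\<in>V. \<forall>y\<in>V. (\<lambda>a b. a \<in> V \<and> b \<in> V \<and> c a b > 0)\<^sup>*\<^sup>* x y)"

definition A_gen :: "'v set \<Rightarrow> ('v \<Rightarrow> 'v \<Rightarrow> real) \<Rightarrow> ('v \<Rightarrow> real) \<Rightarrow> ('v \<Rightarrow> real) \<Rightarrow> 'v \<Rightarrow> real" where
  "A_gen V c \<alpha> f x = (\<Sum>y\<in>V. c x y * \<alpha> y * (f y - f x))"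

definition Xi :: "'v set \<Rightarrow> nat \<Rightarrow> ('v \<Rightarrow> nat) set" where
  "Xi V k = {\<eta>. (\<forall>x. x \<notin> V \<longrightarrow> \<eta> x = 0) \<and> (\<Sum>x\<in>V. \<eta> x) = k}"

text \<open>eta - delta_x + delta_y (used only when eta x >= 1).\<close>
definition move :: "('v \<Rightarrow> nat) \<Rightarrow> 'v \<Rightarrow> 'v \<Rightarrow> ('v \<Rightarrow> nat)" where
  "move \<eta> x y = (\<lambda>z. \<eta> z - (if z = x then 1 else 0) + (if z = y then 1 else 0))"

definition L_gen :: "'v set \<Rightarrow> ('v \<Rightarrow> 'v \<Rightarrow> real) \<Rightarrow> ('v \<Rightarrow> real) \<Rightarrow> (('v \<Rightarrow> nat) \<Rightarrow> real) \<Rightarrow> ('v \<Rightarrow> nat) \<Rightarrow> real" where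
  "L_gen V c \<alpha> f \<eta> = (\<Sum>x\<in>V. real (\<eta> x) * (\<Sum>y\<in>V. c x y * (\<alpha> y + real (\<eta> y)) * (f (move \<eta> x y) - f \<eta>)))"

definition is_eigenfunction_A :: "'v set \<Rightarrow> ('v \<Rightarrow> 'v \<Rightarrow> real) \<Rightarrow> ('v \<Rightarrow> real) \<Rightarrow> ('v \<Rightarrow> real) \<Rightarrow> real \<Rightarrow> bool" where
  "is_eigenfunction_A V c \<alpha> \<psi> lam \<longleftrightarrow>
     (\<exists>x\<in>V. \<psi> x \<noteq> 0) \<and> (\<forall>x\<in>V. - A_gen V c \<alpha> \<psi> x = lam * \<psi> x)"

definition is_eigenfunction_L :: "'v set \<Rightarrow> ('v \<Rightarrow> 'v \<Rightarrow> real) \<Rightarrow> ('v \<Rightarrow> real) \<Rightarrow> nat \<Rightarrow> (('v \<Rightarrow> nat) \<Rightarrow> real) \<Rightarrow> real \<Rightarrow> bool" where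
  "is_eigenfunction_L V c \<alpha> k f lam \<longleftrightarrow>
     (\<exists>\<eta>\<in>Xi V k. f \<eta> \<noteq> 0) \<and> (\<forall>\<eta>\<in>Xi V k. - L_gen V c \<alpha> f \<eta> = lam * f \<eta>)"

definition f_lin :: "'v set \<Rightarrow> ('v \<Rightarrow> real) \<Rightarrow> ('v \<Rightarrow> nat) \<Rightarrow> real" where
  "f_lin V \<psi> \<eta> = (\<Sum>x\<in>V. \<psi> x * real (\<eta> x))"

end

theory Submission
  imports Defs
begin

text \<open>
  A jump from x to y changes the linear statistic f_lin V \<psi> by \<psi> y - \<psi> x. Hence L applied to it
  is the sum over x of \<eta> x times (A \<psi>) x, plus the interaction term, the double sum of
  \<eta> x * \<eta> y * c x y * (\<psi> y - \<psi> x), which vanishes because it is antisymmetric in (x, y)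
  when c is symmetric. So L (f_lin V \<psi>) = f_lin V (A \<psi>), and the eigen-equation transfers.
  The function is non-zero on Xi V k: put all k particles at a vertex where \<psi> does not vanish.
\<close>

lemma sum_sum_antisym_eq_0:
  fixes g :: "'a \<Rightarrow> 'a \<Rightarrow> 'b::linordered_ab_group_add"
  assumes "\<And>x y. x \<in> A \<Longrightarrow> y \<in> A \<Longrightarrow> g y x = - g x y"
  shows "(\<Sum>x\<in>A. \<Sum>y\<in>A. g x y) = 0"
proof -
  have "(\<Sum>x\<in>A. \<Sum>y\<in>A. g x y) = (\<Sum>y\<in>A. \<Sum>x\<in>A. g x y)"
    by (rule sum.swap)
  also have "\<dots> = (\<Sum>y\<in>A. \<Sum>x\<in>A. - g y x)"
    using assms by (intro sum.cong refl) (metis minus_minus)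
  also have "\<dots> = - (\<Sum>y\<in>A. \<Sum>x\<in>A. g y x)"
    by (simp add: sum_negf)
  finally show ?thesis by simp
qed

lemma of_nat_move:
  assumes "\<eta> x \<ge> 1"
  shows "real (move \<eta> x y z) = real (\<eta> z) - (if z = x then 1 else 0) + (if z = y then 1 else 0)"
  using assms unfolding move_def by (auto simp: of_nat_diff)

lemma f_lin_move:
  assumes "finite V" "x \<in> V" "y \<in> V" "\<eta> x \<ge> 1"
  shows "f_lin V \<psi> (move \<eta> x y) = f_lin V \<psi> \<eta> - \<psi> x + \<psi> y"
proof -
  have "f_lin V \<psi> (move \<eta> x y) =
      (\<Sum>z\<in>V. \<psi> z * real (\<eta> z) - (if z = x then \<psi> z else 0) + (if z = y then \<psi> z else 0))"
    unfolding f_lin_def using assms(4) by (intro sum.cong) (auto simp: of_nat_move algebra_simps)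
  also have "\<dots> = f_lin V \<psi> \<eta> - \<psi> x + \<psi> y"
    using assms unfolding f_lin_def by (simp add: sum.distrib sum_subtractf)
  finally show ?thesis .
qed

lemma f_lin_point_mass:
  assumes "finite V" "x\<^sub>0 \<in> V"
  shows "f_lin V \<psi> (\<lambda>z. if z = x\<^sub>0 then k else 0) = \<psi> x\<^sub>0 * real k"
  using assms unfolding f_lin_def by (simp add: if_distrib[of real] if_distrib[of "(*) _"] cong: if_cong)

lemma point_mass_in_Xi:
  assumes "finite V" "x\<^sub>0 \<in> V"
  shows "(\<lambda>z. if z = x\<^sub>0 then k else 0) \<in> Xi V k"
  using assms unfolding Xi_def by auto

lemma L_gen_f_lin:
  assumes "finite V" and sym: "\<And>x y. x \<in> V \<Longrightarrow> y \<in> V \<Longrightarrow> c x y = c y x"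
  shows "L_gen V c \<alpha> (f_lin V \<psi>) \<eta> = f_lin V (A_gen V c \<alpha> \<psi>) \<eta>"
proof -
  have "L_gen V c \<alpha> (f_lin V \<psi>) \<eta> =
      (\<Sum>x\<in>V. real (\<eta> x) * (\<Sum>y\<in>V. c x y * (\<alpha> y + real (\<eta> y)) * (\<psi> y - \<psi> x)))"
    unfolding L_gen_def
  proof (intro sum.cong refl)
    fix x assume "x \<in> V"
    then show "real (\<eta> x) * (\<Sum>y\<in>V. c x y * (\<alpha> y + real (\<eta> y)) * (f_lin V \<psi> (move \<eta> x y) - f_lin V \<psi> \<eta>)) =
        real (\<eta> x) * (\<Sum>y\<in>V. c x y * (\<alpha> y + real (\<eta> y)) * (\<psi> y - \<psi> x))"
      using \<open>finite V\<close> by (cases "\<eta> x = 0") (simp_all add: f_lin_move)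
  qed
  also have "\<dots> = f_lin V (A_gen V c \<alpha> \<psi>) \<eta>
      + (\<Sum>x\<in>V. \<Sum>y\<in>V. real (\<eta> x) * real (\<eta> y) * c x y * (\<psi> y - \<psi> x))"
    unfolding f_lin_def A_gen_def
    by (simp add: sum.distrib[symmetric] sum_distrib_left algebra_simps)
  also have "(\<Sum>x\<in>V. \<Sum>y\<in>V. real (\<eta> x) * real (\<eta> y) * c x y * (\<psi> y - \<psi> x)) = 0"
    by (rule sum_sum_antisym_eq_0) (simp add: sym algebra_simps)
  finally show ?thesis by simp
qed

theorem lemma2p1:
  fixes V :: "'v set" and c :: "'v \<Rightarrow> 'v \<Rightarrow> real" and \<alpha> \<psi> :: "'v \<Rightarrow> real"
    and lam :: real and k :: nat
  assumes "weighted_connected_graph V c"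
    and "\<forall>x\<in>V. \<alpha> x > 0"
    and "is_eigenfunction_A V c \<alpha> \<psi> lam"
    and "lam \<ge> 0"
    and "k \<ge> 1"
  shows "is_eigenfunction_L V c \<alpha> k (f_lin V \<psi>) lam"
proof -
  have fin: "finite V" and sym: "\<And>x y. x \<in> V \<Longrightarrow> y \<in> V \<Longrightarrow> c x y = c y x"
    using assms(1) unfolding weighted_connected_graph_def by auto
  obtain x\<^sub>0 where x\<^sub>0: "x\<^sub>0 \<in> V" "\<psi> x\<^sub>0 \<noteq> 0"
    and eig: "\<And>x. x \<in> V \<Longrightarrow> A_gen V c \<alpha> \<psi> x = - lam * \<psi> x"
    using assms(3) unfolding is_eigenfunction_A_def by (metis minus_equation_iff mult_minus_left)
  have "f_lin V \<psi> (\<lambda>z. if z = x\<^sub>0 then k else 0) \<noteq> 0"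
    using f_lin_point_mass[OF fin x\<^sub>0(1)] x\<^sub>0(2) assms(5) by simp
  moreover have "- L_gen V c \<alpha> (f_lin V \<psi>) \<eta> = lam * f_lin V \<psi> \<eta>" for \<eta>
  proof -
    have "f_lin V (A_gen V c \<alpha> \<psi>) \<eta> = - lam * f_lin V \<psi> \<eta>"
      unfolding f_lin_def by (simp add: eig sum_distrib_left sum_negf mult.assoc)
    then show ?thesis by (simp add: L_gen_f_lin[OF fin sym])
  qed
  ultimately show ?thesis
    using point_mass_in_Xi[OF fin x\<^sub>0(1)] unfolding is_eigenfunction_L_def by blast
qed

end
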